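(* Let $G$ be a split reductive group whose root system $\Phi$ is irreducible of simply-laced type and of rank $r\geqslant2$, and let $\widetilde G$ be an $n$-fold Brylinski--Deligne cover associated with a Weyl-invariant quadratic form $Q$. Then $n_\alpha$ is independent of $\alpha\in\Delta$ and $$\mathrm{Im}(f_X)=\frac{[1,\mathrm{ht}(\alpha_0)]}{n_\alpha}=\mathrm{Im}(f_Y),$$ where $\mathrm{ht}(\alpha_0)$ is the height of the highest root $\alpha_0$ and $[a,b]$ denotes $\{a,a+1,\dots,b\}$.
   Context: Notation: root datum $(X,\Phi,\Delta;Y,\Phi^\vee,\Delta^\vee)$, positive roots $\Phi_+$, positive coroots $\Phi_+^\vee$; $\omega_\alpha\in X\otimes\mathbf R$ ($\alpha\in\Delta$) the fundamental weights (dual to $\Delta^\vee$), $\omega_\alpha^\vee$ the fundamental coweights, $\rho^\vee=\sum_{\alpha\in\Delta}\omega^\vee_\alpha$. $B_Q(y,z)=Q(y+z)-Q(y)-Q(z)$, $Y_{Q,n}=\{y\in Y:B_Q(y,z)\in n\mathbf Z\ \forall z\in Y\}$, $n_\alpha=n/\gcd(n,Q(\alpha^\vee))$, and $\tilde n_\alpha\in\{n_\alpha,n_\alpha/2\}$ ($\alpha\in\Phi$) is defined by $\mathbf Z\alpha^\vee\cap Y_{Q,n}=\mathbf Z\tilde n_\alpha\alpha^\vee$. Define $f_X:\Phi_+^\vee\to\mathbf Q$ by $f_X(\beta^\vee)=\sum_{\alpha\in\Delta}\langle\omega_\alpha/\tilde n_\alpha,\beta^\vee\rangle$ and $f_Y:\Phi_+\to\mathbf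 Q$ by $f_Y(\beta)=\langle\rho^\vee,\beta\rangle/\tilde n_\beta$. *)

theory Defs
  imports Complex_Main "HOL-Library.Function_Algebras"
begin

text \<open>Lattices X = Y = 'm => int (free of finite rank), with the standard perfect pairing.
  Real vector spaces X (x) R, Y (x) R are 'm => real.\<close>

type_synonym 'm lat = "'m \<Rightarrow> int"
type_synonym 'm rlat = "'m \<Rightarrow> real"

definition pair :: "'m::finite lat \<Rightarrow> 'm lat \<Rightarrow> int" where
  "pair x y = (\<Sum>i\<in>UNIV. x i * y i)"

definition rpair :: "'m::finite rlat \<Rightarrow> 'm lat \<Rightarrow> real" where
  "rpair w y = (\<Sum>i\<in>UNIV. w i * of_int (y i))"

definition smul :: "int \<Rightarrow> 'm lat \<Rightarrow> 'm lat" where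
  "smul k x = (\<lambda>i. k * x i)"

definition reflX :: "'m::finite lat \<Rightarrow> 'm lat \<Rightarrow> 'm lat \<Rightarrow> 'm lat" where
  "reflX a av x = (\<lambda>i. x i - pair x av * a i)"

definition reflY :: "'m::finite lat \<Rightarrow> 'm lat \<Rightarrow> 'm lat \<Rightarrow> 'm lat" where
  "reflY a av y = (\<lambda>i. y i - pair a y * av i)"

definition root_datum :: "'m::finite lat set \<Rightarrow> ('m lat \<Rightarrow> 'm lat) \<Rightarrow> bool" where
  "root_datum Phi cv \<longleftrightarrow> finite Phi \<and> inj_on cv Phi \<and>
     (\<forall>a\<in>Phi. pair a (cv a) = 2) \<and>
     (\<forall>a\<in>Phi. \<forall>b\<in>Phi. reflX a (cv a) b \<in> Phi) \<and>
     (\<forall>a\<in>Phi. \<forall>b\<in>Phi. reflY a (cv a) (cv b) \<in> cv ` Phi) \<and>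
     (\<forall>a\<in>Phi. smul 2 a \<notin> Phi)"

definition is_base :: "'m::finite lat set \<Rightarrow> 'm lat set \<Rightarrow> bool" where
  "is_base Phi Delta \<longleftrightarrow> Delta \<subseteq> Phi \<and>
     (\<forall>c::'m lat \<Rightarrow> int. (\<forall>i. (\<Sum>a\<in>Delta. c a * a i) = 0) \<longrightarrow> (\<forall>a\<in>Delta. c a = 0)) \<and>
     (\<forall>b\<in>Phi. \<exists>c::'m lat \<Rightarrow> int. (\<forall>i. b i = (\<Sum>a\<in>Delta. c a * a i)) \<and>
         ((\<forall>a\<in>Delta. c a \<ge> 0) \<or> (\<forall>a\<in>Delta. c a \<le> 0)))"

definition pos_roots :: "'m::finite lat set \<Rightarrow> 'm lat set \<Rightarrow> 'm lat set" where
  "pos_roots Phi Delta = {b\<in>Phi. \<exists>c::'m lat \<Rightarrow> int. (\<forall>i. b i = (\<Sum>a\<in>Delta. c a * a i)) \<and>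
         (\<forall>a\<in>Delta. c a \<ge> 0)}"

text \<open>Simply-laced: symmetric Cartan matrix. Irreducible: connected Dynkin diagram.\<close>
definition simply_laced :: "'m::finite lat set \<Rightarrow> ('m lat \<Rightarrow> 'm lat) \<Rightarrow> bool" where
  "simply_laced Delta cv \<longleftrightarrow> (\<forall>a\<in>Delta. \<forall>b\<in>Delta. pair a (cv b) = pair b (cv a))"

definition irreducible_base :: "'m::finite lat set \<Rightarrow> ('m lat \<Rightarrow> 'm lat) \<Rightarrow> bool" where
  "irreducible_base Delta cv \<longleftrightarrow> Delta \<noteq> {} \<and>
     \<not> (\<exists>A B. A \<noteq> {} \<and> B \<noteq> {} \<and> A \<union> B = Delta \<and> A \<inter> B = {} \<and>
           (\<forall>a\<in>A. \<forall>b\<in>B. pair a (cv b) = 0))"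

definition B_Q :: "('m lat \<Rightarrow> int) \<Rightarrow> 'm lat \<Rightarrow> 'm lat \<Rightarrow> int" where
  "B_Q Q y z = Q (y + z) - Q y - Q z"

definition quadratic_form :: "('m lat \<Rightarrow> int) \<Rightarrow> bool" where
  "quadratic_form Q \<longleftrightarrow> (\<forall>k y. Q (smul k y) = k^2 * Q y) \<and>
     (\<forall>y y' z. B_Q Q (y + y') z = B_Q Q y z + B_Q Q y' z)"

text \<open>Weyl-invariance: invariance under the reflections generating W (acting on Y).\<close>
definition weyl_invariant :: "'m::finite lat set \<Rightarrow> ('m lat \<Rightarrow> 'm lat) \<Rightarrow> ('m lat \<Rightarrow> int) \<Rightarrow> bool" where
  "weyl_invariant Phi cv Q \<longleftrightarrow> (\<forall>a\<in>Phi. \<forall>y. Q (reflY a (cv a) y) = Q y)"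

definition Y_Qn :: "('m lat \<Rightarrow> int) \<Rightarrow> nat \<Rightarrow> 'm lat set" where
  "Y_Qn Q n = {y. \<forall>z. int n dvd B_Q Q y z}"

definition n_root :: "('m lat \<Rightarrow> int) \<Rightarrow> nat \<Rightarrow> ('m lat \<Rightarrow> 'm lat) \<Rightarrow> 'm lat \<Rightarrow> int" where
  "n_root Q n cv a = int n div gcd (int n) (Q (cv a))"

definition n_tilde :: "('m lat \<Rightarrow> int) \<Rightarrow> nat \<Rightarrow> ('m lat \<Rightarrow> 'm lat) \<Rightarrow> 'm lat \<Rightarrow> int" where
  "n_tilde Q n cv a = (THE k. k > 0 \<and>
      {smul m (cv a) | m. True} \<inter> Y_Qn Q n = {smul (m * k) (cv a) | m. True})"

definition f_X :: "'m::finite lat set \<Rightarrow> ('m lat \<Rightarrow> 'm rlat) \<Rightarrow> ('m lat \<Rightarrow> int) \<Rightarrow> nat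
    \<Rightarrow> ('m lat \<Rightarrow> 'm lat) \<Rightarrow> 'm lat \<Rightarrow> real" where
  "f_X Delta omega Q n cv bv = (\<Sum>a\<in>Delta. rpair (omega a) bv / of_int (n_tilde Q n cv a))"

definition f_Y :: "'m::finite lat set \<Rightarrow> ('m lat \<Rightarrow> 'm rlat) \<Rightarrow> ('m lat \<Rightarrow> int) \<Rightarrow> nat
    \<Rightarrow> ('m lat \<Rightarrow> 'm lat) \<Rightarrow> 'm lat \<Rightarrow> real" where
  "f_Y Delta omegav Q n cv b = rpair (\<Sum>a\<in>Delta. omegav a) b / of_int (n_tilde Q n cv b)"

text \<open>height of a root: <rho^v, beta>; ht(alpha_0) = maximal height of a positive root.\<close>
definition ht :: "'m::finite lat set \<Rightarrow> ('m lat \<Rightarrow> 'm rlat) \<Rightarrow> 'm lat \<Rightarrow> real" where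
  "ht Delta omegav b = rpair (\<Sum>a\<in>Delta. omegav a) b"

end

theory Submission
  imports Defs
begin

text \<open>In an irreducible simply-laced root system all roots have the same length for the
  \<open>W\<close>-invariant form, so \<open>\<langle>\<beta>, \<alpha>\<^sup>\<or>\<rangle> = \<langle>\<alpha>, \<beta>\<^sup>\<or>\<rangle> \<in> {0, \<plusminus>1}\<close> for non-proportional roots.
  Hence every positive root arises from a simple root by a chain of simple reflections, each
  raising the height by one; along such a chain \<open>\<beta>\<^sup>\<or>\<close> keeps the coordinates of \<open>\<beta>\<close>, and
  some \<open>y \<in> Y\<close> with \<open>\<langle>\<beta>, y\<rangle> = 1\<close> is carried along.
  Weyl invariance of \<open>Q\<close> gives \<open>B\<^sub>Q(\<alpha>\<^sup>\<or>, y) = \<langle>\<alpha>, y\<rangle> Q(\<alpha>\<^sup>\<or>)\<close>, and \<open>Q(\<alpha>\<^sup>\<or>)\<close> is constant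
  along the connected Dynkin diagram, hence on all positive coroots. Therefore
  \<open>\<tilde>n\<^sub>\<beta> = n\<^sub>\<alpha> = n / gcd(n, Q(\<alpha>\<^sup>\<or>))\<close> for every positive \<open>\<beta>\<close>, so
  \<open>f\<^sub>X(\<beta>\<^sup>\<or>) = f\<^sub>Y(\<beta>) = ht(\<beta>) / n\<^sub>\<alpha>\<close>, and the heights of the positive roots fill
  \<open>[1, ht(\<alpha>\<^sub>0)]\<close>.\<close>

section \<open>Lattices, reflections and quadratic forms\<close>

lemma sum_fun_apply: "(\<Sum>a\<in>A. f a) x = (\<Sum>a\<in>A. f a x)"
  by (induction A rule: infinite_finite_induct) auto

lemma smul_apply: "smul k x i = k * x i"
  by (simp add: smul_def)

lemma smul_0 [simp]: "smul 0 x = 0"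
  by (simp add: fun_eq_iff smul_apply)

lemma smul_1 [simp]: "smul 1 x = x"
  by (simp add: fun_eq_iff smul_apply)

lemma smul_add_left: "smul (k + l) x = smul k x + smul l x"
  by (simp add: fun_eq_iff smul_apply algebra_simps)

lemma smul_cancel_right:
  assumes "v \<noteq> 0" shows "smul m v = smul m' v \<longleftrightarrow> m = m'"
proof
  assume eq: "smul m v = smul m' v"
  obtain i where "v i \<noteq> 0" using assms by (auto simp: fun_eq_iff smul_apply)
  with fun_cong[OF eq, of i] show "m = m'" by (simp add: smul_apply)
qed simp

lemma sum_smul_single:
  assumes "finite A" "a \<in> A" "\<forall>x\<in>A - {a}. c x = 0"
  shows "(\<Sum>x\<in>A. smul (c x) (v x)) = smul (c a) (v a)"
proof -
  have "(\<Sum>x\<in>A. smul (c x) (v x)) = (\<Sum>x\<in>A. if x = a then smul (c a) (v a) else 0)"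
    using assms(3) by (intro sum.cong) auto
  then show ?thesis using assms(1,2) by simp
qed

lemma pair_commute: "pair x y = pair y x"
  by (simp add: pair_def mult.commute)

lemma pair_zero_left [simp]: "pair 0 y = 0"
  by (simp add: pair_def)

lemma pair_add_left: "pair (x + x') y = pair x y + pair x' y"
  by (simp add: pair_def algebra_simps sum.distrib)

lemma pair_diff_left: "pair (x - x') y = pair x y - pair x' y"
  by (simp add: pair_def algebra_simps sum_subtractf)

lemma pair_uminus_left: "pair (- x) y = - pair x y"
  by (simp add: pair_def sum_negf)

lemma pair_smul_left: "pair (smul k x) y = k * pair x y"
  by (simp add: pair_def smul_apply sum_distrib_left mult.assoc)

lemma pair_sum_left: "pair (\<Sum>a\<in>A. f a) y = (\<Sum>a\<in>A. pair (f a) y)"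
  by (simp add: pair_def sum_fun_apply sum_distrib_right sum.swap[of _ A])

lemma pair_add_right: "pair x (y + y') = pair x y + pair x y'"
  by (simp add: pair_def algebra_simps sum.distrib)

lemma pair_diff_right: "pair x (y - y') = pair x y - pair x y'"
  by (simp add: pair_def algebra_simps sum_subtractf)

lemma pair_uminus_right: "pair x (- y) = - pair x y"
  by (simp add: pair_def sum_negf)

lemma pair_smul_right: "pair x (smul k y) = k * pair x y"
  by (simp add: pair_def smul_apply sum_distrib_left mult.left_commute)

lemmas pair_linear =
  pair_add_left pair_diff_left pair_uminus_left pair_smul_left
  pair_add_right pair_diff_right pair_uminus_right pair_smul_right

lemma pair_right_inject:
  assumes "\<And>x. pair x y = pair x y'" shows "y = y'"
proof
  fix i
  have "pair (\<lambda>j. of_bool (j = i)) y = y i" for y :: "'a::finite lat"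
    by (simp add: pair_def)
  then show "y i = y' i" using assms by metis
qed

lemma rpair_sum_left: "rpair (\<Sum>a\<in>A. w a) y = (\<Sum>a\<in>A. rpair (w a) y)"
  by (simp add: rpair_def sum_fun_apply sum_distrib_right sum.swap[of _ A])

lemma rpair_smul_right: "rpair w (smul k y) = of_int k * rpair w y"
  by (simp add: rpair_def smul_apply sum_distrib_left mult.left_commute)

lemma rpair_sum_right: "rpair w (\<Sum>a\<in>A. f a) = (\<Sum>a\<in>A. rpair w (f a))"
  by (simp add: rpair_def sum_fun_apply sum_distrib_left sum.swap[of _ A])

lemma rpair_dual_basis_sum:
  assumes "finite D" "a \<in> D" "\<forall>a\<in>D. \<forall>b\<in>D. rpair (w a) (v b) = (if a = b then 1 else 0)"
  shows "rpair (w a) (\<Sum>x\<in>D. smul (c x) (v x)) = of_int (c a)"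
proof -
  have "rpair (w a) (\<Sum>x\<in>D. smul (c x) (v x)) = (\<Sum>x\<in>D. if a = x then of_int (c x) else 0)"
    unfolding rpair_sum_right rpair_smul_right using assms(2,3) by (intro sum.cong) auto
  then show ?thesis using assms(1,2) by simp
qed

lemma reflX_eq: "reflX a av x = x - smul (pair x av) a"
  by (simp add: reflX_def fun_eq_iff smul_apply)

lemma reflY_eq: "reflY a av y = y - smul (pair a y) av"
  by (simp add: reflY_def fun_eq_iff smul_apply)

lemma pair_reflX: "pair (reflX a av x) y = pair x (reflY a av y)"
  by (simp add: reflX_eq reflY_eq pair_linear)

lemma reflY_add: "reflY a av (y + y') = reflY a av y + reflY a av y'"
  by (simp add: reflY_eq pair_add_right fun_eq_iff smul_apply algebra_simps)

lemma reflX_diff: "reflX a av (x - x') = reflX a av x - reflX a av x'"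
  by (simp add: reflX_eq pair_diff_left fun_eq_iff smul_apply algebra_simps)

lemma reflX_smul: "reflX a av (smul k x) = smul k (reflX a av x)"
  by (simp add: reflX_eq pair_smul_left fun_eq_iff smul_apply algebra_simps)

lemma transvection_stable_finite_set_trivial:
  fixes S :: "'m::finite lat set"
  assumes "finite S" and stable: "\<forall>x\<in>S. x + smul (pair x y) e \<in> S"
    and "pair e y = 0" and "x0 \<in> S" and "pair x0 y \<noteq> 0"
  shows "e = 0"
proof (rule ccontr)
  assume "e \<noteq> 0"
  define orbit where "orbit k = x0 + smul (int k * pair x0 y) e" for k :: nat
  have "pair (orbit k) y = pair x0 y" for k
    using \<open>pair e y = 0\<close> by (simp add: orbit_def pair_add_left pair_smul_left)
  then have "orbit (Suc k) = orbit k + smul (pair (orbit k) y) e" for k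
    by (simp add: orbit_def fun_eq_iff smul_apply algebra_simps)
  moreover have "orbit 0 = x0" by (simp add: orbit_def)
  ultimately have "orbit k \<in> S" for k
    using stable \<open>x0 \<in> S\<close> by (induction k) simp_all
  moreover have "inj orbit"
    using \<open>e \<noteq> 0\<close> \<open>pair x0 y \<noteq> 0\<close> by (auto intro!: injI simp: orbit_def smul_cancel_right)
  ultimately have "infinite S"
    using infinite_UNIV_nat by (metis finite_imageD finite_subset image_subsetI)
  with \<open>finite S\<close> show False by simp
qed

lemma B_Q_commute: "B_Q Q y z = B_Q Q z y"
  by (simp add: B_Q_def add.commute)

lemma B_Q_add_left: "quadratic_form Q \<Longrightarrow> B_Q Q (y + y') z = B_Q Q y z + B_Q Q y' z"
  unfolding quadratic_form_def by blast

lemma B_Q_add_right: "quadratic_form Q \<Longrightarrow> B_Q Q z (y + y') = B_Q Q z y + B_Q Q z y'"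
  by (simp only: B_Q_commute[of Q z] B_Q_add_left)

lemma B_Q_smul_left:
  assumes "quadratic_form Q" shows "B_Q Q (smul k y) z = k * B_Q Q y z"
proof (rule int_induct[where k = 0 and P = "\<lambda>k. B_Q Q (smul k y) z = k * B_Q Q y z"])
  show "B_Q Q (smul 0 y) z = 0 * B_Q Q y z"
    using B_Q_add_left[OF assms, of 0 0 z] by simp
next
  fix i assume "B_Q Q (smul i y) z = i * B_Q Q y z"
  moreover have "smul (i + 1) y = smul i y + y" by (simp add: smul_add_left)
  ultimately show "B_Q Q (smul (i + 1) y) z = (i + 1) * B_Q Q y z"
    by (simp add: B_Q_add_left[OF assms] algebra_simps)
next
  fix i assume "B_Q Q (smul i y) z = i * B_Q Q y z"
  moreover have "smul i y = smul (i - 1) y + y" by (simp add: fun_eq_iff smul_apply algebra_simps)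
  ultimately show "B_Q Q (smul (i - 1) y) z = (i - 1) * B_Q Q y z"
    by (simp add: B_Q_add_left[OF assms] algebra_simps)
qed

lemma B_Q_smul_right: "quadratic_form Q \<Longrightarrow> B_Q Q z (smul k y) = k * B_Q Q z y"
  by (simp only: B_Q_commute[of Q z] B_Q_smul_left)

lemma B_Q_self:
  assumes "quadratic_form Q" shows "B_Q Q y y = 2 * Q y"
proof -
  have "y + y = smul 2 y" by (simp add: fun_eq_iff smul_apply)
  moreover have "Q (smul 2 y) = 2\<^sup>2 * Q y" using assms unfolding quadratic_form_def by blast
  ultimately show ?thesis by (simp add: B_Q_def)
qed

lemma dvd_mult_iff_div_gcd_dvd:
  fixes n q m :: int assumes "n > 0"
  shows "n dvd m * q \<longleftrightarrow> n div gcd n q dvd m"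
proof -
  define g where "g = gcd n q"
  have "g > 0" using assms by (simp add: g_def)
  have n: "n = g * (n div g)" and q: "q = g * (q div g)" by (simp_all add: g_def)
  have "coprime (n div g) (q div g)"
    using div_gcd_coprime[of n q] assms by (simp add: g_def)
  have "n dvd m * q \<longleftrightarrow> g * (n div g) dvd g * (m * (q div g))"
    using n q by (metis mult.left_commute)
  also have "\<dots> \<longleftrightarrow> n div g dvd m * (q div g)" using \<open>g > 0\<close> by simp
  also have "\<dots> \<longleftrightarrow> n div g dvd m"
    using \<open>coprime (n div g) (q div g)\<close> coprime_dvd_mult_left_iff by blast
  finally show ?thesis by (simp add: g_def)
qed

lemma smul_mem_Y_Qn_iff:
  assumes "quadratic_form Q" and B: "\<And>z. B_Q Q v z = pair b z * q"
    and "pair b y = 1" and "n \<ge> 1"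
  shows "smul m v \<in> Y_Qn Q n \<longleftrightarrow> int n div gcd (int n) q dvd m"
proof -
  have "smul m v \<in> Y_Qn Q n \<longleftrightarrow> (\<forall>z. int n dvd m * q * pair b z)"
    by (simp add: Y_Qn_def B_Q_smul_left[OF assms(1)] B ac_simps)
  also have "\<dots> \<longleftrightarrow> int n dvd m * q"
    using \<open>pair b y = 1\<close> by (metis dvd_mult2 mult.right_neutral)
  also have "\<dots> \<longleftrightarrow> int n div gcd (int n) q dvd m"
    using \<open>n \<ge> 1\<close> by (intro dvd_mult_iff_div_gcd_dvd) simp
  finally show ?thesis .
qed

lemma n_tilde_eqI:
  assumes "cv b \<noteq> 0" "N > 0" and Y: "\<And>m. smul m (cv b) \<in> Y_Qn Q n \<longleftrightarrow> N dvd m"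
  shows "n_tilde Q n cv b = N"
  unfolding n_tilde_def
proof (rule the_equality)
  show "N > 0 \<and> {smul m (cv b) | m. True} \<inter> Y_Qn Q n = {smul (m * N) (cv b) | m. True}"
    using \<open>N > 0\<close> by (auto simp: Y elim!: dvdE) (metis mult.commute)
next
  fix k assume k: "k > 0 \<and> {smul m (cv b) | m. True} \<inter> Y_Qn Q n = {smul (m * k) (cv b) | m. True}"
  then have "smul (1 * k) (cv b) \<in> Y_Qn Q n" by blast
  then have "N dvd k" by (simp add: Y)
  have "smul N (cv b) \<in> {smul m (cv b) | m. True} \<inter> Y_Qn Q n" using Y[of N] by auto
  then obtain m where "smul N (cv b) = smul (m * k) (cv b)" using k by auto
  then have "k dvd N" using \<open>cv b \<noteq> 0\<close> by (simp add: smul_cancel_right)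
  with \<open>N dvd k\<close> show "k = N" using k \<open>N > 0\<close> by (simp add: zdvd_antisym_nonneg)
qed

lemma image_divide_int_interval:
  "(\<lambda>h. real_of_int h / d) ` {1..M} = {real k / d | k::nat. 1 \<le> k \<and> real k \<le> real_of_int M}"
proof (intro set_eqI iffI)
  fix x assume "x \<in> (\<lambda>h. real_of_int h / d) ` {1..M}"
  then obtain h where "1 \<le> h" "h \<le> M" "x = real_of_int h / d" by auto
  then show "x \<in> {real k / d | k::nat. 1 \<le> k \<and> real k \<le> real_of_int M}"
    by (intro CollectI exI[of _ "nat h"]) auto
next
  fix x assume "x \<in> {real k / d | k::nat. 1 \<le> k \<and> real k \<le> real_of_int M}"
  then obtain k :: nat where "1 \<le> k" "real k \<le> real_of_int M" "x = real k / d" by blast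
  then show "x \<in> (\<lambda>h. real_of_int h / d) ` {1..M}"
    by (intro image_eqI[of _ _ "int k"]) auto
qed

section \<open>Root data and bases\<close>

locale root_system =
  fixes Phi :: "'m::finite lat set" and cv :: "'m lat \<Rightarrow> 'm lat"
  assumes root_datum: "root_datum Phi cv"
begin

abbreviation s :: "'m lat \<Rightarrow> 'm lat \<Rightarrow> 'm lat" where "s a \<equiv> reflX a (cv a)"
abbreviation sv :: "'m lat \<Rightarrow> 'm lat \<Rightarrow> 'm lat" where "sv a \<equiv> reflY a (cv a)"

lemma finite_roots: "finite Phi"
  using root_datum by (simp add: root_datum_def)

lemma inj_on_coroot: "inj_on cv Phi"
  using root_datum by (simp add: root_datum_def)

lemma pair_root_coroot_self: "a \<in> Phi \<Longrightarrow> pair a (cv a) = 2"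
  using root_datum by (simp add: root_datum_def)

lemma reflX_root: "a \<in> Phi \<Longrightarrow> b \<in> Phi \<Longrightarrow> s a b \<in> Phi"
  using root_datum by (simp add: root_datum_def)

lemma reflY_coroot: "a \<in> Phi \<Longrightarrow> b \<in> Phi \<Longrightarrow> sv a (cv b) \<in> cv ` Phi"
  using root_datum by (simp add: root_datum_def)

lemma smul_2_root_not_root: "a \<in> Phi \<Longrightarrow> smul 2 a \<notin> Phi"
  using root_datum by (simp add: root_datum_def)

lemma root_nonzero: "a \<in> Phi \<Longrightarrow> a \<noteq> 0"
  using pair_root_coroot_self by fastforce

lemma coroot_nonzero: "a \<in> Phi \<Longrightarrow> cv a \<noteq> 0"
  using pair_root_coroot_self by (fastforce simp: pair_commute[of a])

lemma reflX_self: "a \<in> Phi \<Longrightarrow> s a a = - a"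
  by (simp add: reflX_eq pair_root_coroot_self fun_eq_iff smul_apply)

lemma reflY_self: "a \<in> Phi \<Longrightarrow> sv a (cv a) = - cv a"
  by (simp add: reflY_eq pair_root_coroot_self fun_eq_iff smul_apply)

lemma reflX_involution: "a \<in> Phi \<Longrightarrow> s a (s a x) = x"
  by (simp add: reflX_eq pair_linear pair_root_coroot_self fun_eq_iff smul_apply algebra_simps)

lemma reflY_involution: "a \<in> Phi \<Longrightarrow> sv a (sv a y) = y"
  by (simp add: reflY_eq pair_linear pair_root_coroot_self fun_eq_iff smul_apply algebra_simps)

lemma uminus_root: "b \<in> Phi \<Longrightarrow> - b \<in> Phi"
  using reflX_self reflX_root by metis

lemma root_pos_multiple_eq:
  assumes "a \<in> Phi" "smul m a \<in> Phi" "m > 0"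
  shows "smul m a = a"
proof -
  have "m * pair a (cv (smul m a)) = 2"
    using pair_root_coroot_self[OF assms(2)] by (simp add: pair_smul_left)
  then have "m dvd 2" by (metis dvd_triv_left)
  then have "m = 1 \<or> m = 2"
    using \<open>m > 0\<close> zdvd_imp_le[of m 2] by auto
  with assms(1,2) smul_2_root_not_root show ?thesis by auto
qed

text \<open>The reflection through \<open>s\<^sub>a b\<close> is \<open>s\<^sub>a s\<^sub>b s\<^sub>a\<close>; composing it with the
  reflection through the root whose coroot is \<open>s\<^sub>a\<^sup>\<or> b\<^sup>\<or>\<close> gives a transvection
  preserving the finite set of roots, which must therefore be trivial.\<close>
lemma coroot_reflX:
  assumes a: "a \<in> Phi" and b: "b \<in> Phi"
  shows "cv (s a b) = sv a (cv b)"
proof -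
  obtain d where d: "d \<in> Phi" "cv d = sv a (cv b)"
    using reflY_coroot[OF a b] by auto
  define g where "g = s a b"
  have conj: "s a (s b (s a x)) = x - smul (pair x (cv d)) g" for x
    by (simp add: reflX_eq[of b] reflX_diff reflX_smul reflX_involution[OF a] pair_reflX d(2)
        g_def)
  have "pair g (cv d) = 2"
    using pair_reflX[of a "cv a" b] reflY_involution[OF a] pair_root_coroot_self[OF b]
    by (simp add: g_def d(2))
  then have "pair (g - d) (cv d) = 0"
    by (simp add: pair_diff_left pair_root_coroot_self[OF d(1)])
  moreover have "s a (s b (s a (s d x))) = x + smul (pair x (cv d)) (g - d)" for x
    unfolding conj by (simp add: reflX_eq pair_linear pair_root_coroot_self[OF d(1)]
        fun_eq_iff smul_apply algebra_simps)
  then have "\<forall>x\<in>Phi. x + smul (pair x (cv d)) (g - d) \<in> Phi"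
    using reflX_root a b d(1) by metis
  ultimately have "g - d = 0"
    using transvection_stable_finite_set_trivial[OF finite_roots] d(1)
      pair_root_coroot_self[OF d(1)] by fastforce
  then show ?thesis using d(2) by (simp add: g_def)
qed

lemma bij_betw_reflX: "a \<in> Phi \<Longrightarrow> bij_betw (s a) Phi Phi"
  by (rule bij_betw_byWitness[where f' = "s a"]) (auto simp: reflX_involution reflX_root)

text \<open>The standard \<open>W\<close>-invariant form on \<open>X\<close>; it measures the lengths of roots.\<close>
definition inv_form :: "'m lat \<Rightarrow> 'm lat \<Rightarrow> int" where
  "inv_form x y = (\<Sum>g\<in>Phi. pair x (cv g) * pair y (cv g))"

lemma inv_form_commute: "inv_form x y = inv_form y x"
  by (simp add: inv_form_def mult.commute)

lemma inv_form_diff_left: "inv_form (x - x') y = inv_form x y - inv_form x' y"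
  by (simp add: inv_form_def pair_diff_left algebra_simps sum_subtractf)

lemma inv_form_uminus_left: "inv_form (- x) y = - inv_form x y"
  by (simp add: inv_form_def pair_uminus_left sum_negf)

lemma inv_form_smul_left: "inv_form (smul k x) y = k * inv_form x y"
  by (simp add: inv_form_def pair_smul_left sum_distrib_left mult.assoc)

lemma inv_form_sum_left: "inv_form (\<Sum>a\<in>A. f a) y = (\<Sum>a\<in>A. inv_form (f a) y)"
  by (simp add: inv_form_def pair_sum_left sum_distrib_right sum.swap[of _ A])

lemma inv_form_diff_right: "inv_form x (y - y') = inv_form x y - inv_form x y'"
  by (simp only: inv_form_commute[of x] inv_form_diff_left)

lemma inv_form_uminus_right: "inv_form x (- y) = - inv_form x y"
  by (simp only: inv_form_commute[of x] inv_form_uminus_left)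

lemma inv_form_smul_right: "inv_form x (smul k y) = k * inv_form x y"
  by (simp only: inv_form_commute[of x] inv_form_smul_left)

lemma inv_form_reflX:
  assumes "a \<in> Phi" shows "inv_form (s a x) (s a y) = inv_form x y"
proof -
  have "inv_form (s a x) (s a y) = (\<Sum>g\<in>Phi. pair x (cv (s a g)) * pair y (cv (s a g)))"
    unfolding inv_form_def pair_reflX using assms by (intro sum.cong) (simp_all add: coroot_reflX)
  also have "\<dots> = inv_form x y"
    unfolding inv_form_def by (rule sum.reindex_bij_betw[OF bij_betw_reflX[OF assms]])
  finally show ?thesis .
qed

lemma inv_form_root_right:
  assumes "a \<in> Phi" shows "2 * inv_form x a = pair x (cv a) * inv_form a a"
proof -
  have "inv_form x a = inv_form (s a x) (- a)"
    using inv_form_reflX[OF assms, of x a] by (simp add: reflX_self[OF assms])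
  also have "\<dots> = pair x (cv a) * inv_form a a - inv_form x a"
    by (simp add: reflX_eq inv_form_uminus_right inv_form_diff_left inv_form_smul_left)
  finally show ?thesis by simp
qed

lemma inv_form_nonneg: "inv_form x x \<ge> 0"
  by (simp add: inv_form_def sum_nonneg)

lemma inv_form_root_pos: assumes "a \<in> Phi" shows "inv_form a a > 0"
proof -
  have "pair a (cv a) * pair a (cv a) \<le> inv_form a a"
    unfolding inv_form_def using assms finite_roots by (intro member_le_sum) auto
  then show ?thesis using pair_root_coroot_self[OF assms] by simp
qed

lemma inv_form_eq_0_imp_pair_coroot_eq_0:
  assumes "inv_form x x = 0" "g \<in> Phi" shows "pair x (cv g) = 0"
  using assms sum_nonneg_eq_0_iff[OF finite_roots, of "\<lambda>g. pair x (cv g) * pair x (cv g)"]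
  by (simp add: inv_form_def)

lemma inv_form_eq_if_pair_symmetric:
  assumes "a \<in> Phi" "b \<in> Phi" "pair a (cv b) = pair b (cv a)" "pair a (cv b) \<noteq> 0"
  shows "inv_form a a = inv_form b b"
  using inv_form_root_right[OF assms(1), of b] inv_form_root_right[OF assms(2), of a] assms(3,4)
    inv_form_commute[of a b] by simp

end

locale based_root_system = root_system Phi cv
  for Phi :: "'m::finite lat set" and cv +
  fixes Delta :: "'m lat set"
  assumes base: "is_base Phi Delta"
begin

abbreviation Phi_pos :: "'m lat set" where "Phi_pos \<equiv> pos_roots Phi Delta"

definition simple_comb :: "('m lat \<Rightarrow> int) \<Rightarrow> 'm lat" where
  "simple_comb c = (\<Sum>a\<in>Delta. smul (c a) a)"

text \<open>Only the values on \<open>Delta\<close> are determined, and only for \<open>b\<close> in the span of \<open>Delta\<close>.\<close>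
definition root_coeff :: "'m lat \<Rightarrow> 'm lat \<Rightarrow> int" where
  "root_coeff b = (SOME c. b = simple_comb c)"

definition height :: "'m lat \<Rightarrow> int" where
  "height b = (\<Sum>a\<in>Delta. root_coeff b a)"

lemma simple_roots_subset: "Delta \<subseteq> Phi"
  using base by (simp add: is_base_def)

lemma finite_simple_roots: "finite Delta"
  using simple_roots_subset finite_roots finite_subset by blast

lemma eq_simple_comb_iff: "(\<forall>i. b i = (\<Sum>a\<in>Delta. c a * a i)) \<longleftrightarrow> b = simple_comb c"
  by (simp add: simple_comb_def sum_fun_apply fun_eq_iff smul_apply)

lemma simple_comb_diff: "simple_comb (\<lambda>x. c x - d x) = simple_comb c - simple_comb d"
  by (simp add: simple_comb_def sum_fun_apply fun_eq_iff smul_apply algebra_simps sum_subtractf)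

lemma simple_comb_smul: "simple_comb (\<lambda>x. k * c x) = smul k (simple_comb c)"
  by (simp add: simple_comb_def sum_fun_apply fun_eq_iff smul_apply sum_distrib_left mult.assoc)

lemma simple_comb_uminus: "simple_comb (\<lambda>x. - c x) = - simple_comb c"
  by (simp add: simple_comb_def sum_fun_apply fun_eq_iff smul_apply sum_negf)

lemma simple_comb_single:
  "a \<in> Delta \<Longrightarrow> \<forall>x\<in>Delta - {a}. c x = 0 \<Longrightarrow> simple_comb c = smul (c a) a"
  unfolding simple_comb_def using finite_simple_roots by (rule sum_smul_single)

lemma simple_comb_delta: "a \<in> Delta \<Longrightarrow> simple_comb (\<lambda>x. of_bool (x = a)) = a"
  using simple_comb_single[of a "\<lambda>x. of_bool (x = a)"] by simp

lemma simple_comb_inject: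
  assumes "simple_comb c = simple_comb d" "a \<in> Delta" shows "c a = d a"
proof -
  have indep: "\<forall>e. (\<forall>i. (\<Sum>a\<in>Delta. e a * a i) = 0) \<longrightarrow> (\<forall>a\<in>Delta. e a = 0)"
    using base by (simp add: is_base_def)
  have "simple_comb (\<lambda>x. c x - d x) = 0"
    using assms(1) by (simp add: simple_comb_diff)
  then have "\<forall>i. (\<Sum>a\<in>Delta. (c a - d a) * a i) = 0"
    using eq_simple_comb_iff[of 0 "\<lambda>x. c x - d x"] by simp
  then show ?thesis using indep[rule_format, of "\<lambda>x. c x - d x"] assms(2) by simp
qed

lemma simple_comb_root_coeff_eq: "b = simple_comb c \<Longrightarrow> simple_comb (root_coeff b) = b"
  unfolding root_coeff_def by (rule someI[where P = "\<lambda>c. b = simple_comb c", symmetric])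

lemma root_coeff_eq:
  assumes "b = simple_comb c" "a \<in> Delta" shows "root_coeff b a = c a"
  using simple_comb_inject[OF _ assms(2)] simple_comb_root_coeff_eq assms(1) by metis

lemma root_simple_comb:
  assumes "b \<in> Phi"
  obtains c where "b = simple_comb c" "(\<forall>a\<in>Delta. c a \<ge> 0) \<or> (\<forall>a\<in>Delta. c a \<le> 0)"
proof -
  from base assms obtain c where "\<forall>i. b i = (\<Sum>a\<in>Delta. c a * a i)"
    "(\<forall>a\<in>Delta. c a \<ge> 0) \<or> (\<forall>a\<in>Delta. c a \<le> 0)"
    unfolding is_base_def by blast
  then show thesis using that[of c] by (simp add: eq_simple_comb_iff)
qed

lemma simple_comb_root_coeff: "b \<in> Phi \<Longrightarrow> simple_comb (root_coeff b) = b"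
  using root_simple_comb simple_comb_root_coeff_eq by blast

lemma root_coeff_sign:
  assumes "b \<in> Phi"
  shows "(\<forall>a\<in>Delta. root_coeff b a \<ge> 0) \<or> (\<forall>a\<in>Delta. root_coeff b a \<le> 0)"
proof -
  obtain c where "b = simple_comb c" "(\<forall>a\<in>Delta. c a \<ge> 0) \<or> (\<forall>a\<in>Delta. c a \<le> 0)"
    using root_simple_comb[OF assms] .
  moreover from this(1) have "\<forall>a\<in>Delta. root_coeff b a = c a"
    using root_coeff_eq by blast
  ultimately show ?thesis by simp
qed

lemma pos_roots_iff: "b \<in> Phi_pos \<longleftrightarrow> b \<in> Phi \<and> (\<forall>a\<in>Delta. root_coeff b a \<ge> 0)"
proof
  assume "b \<in> Phi_pos"
  then obtain c where "b \<in> Phi" "b = simple_comb c" "\<forall>a\<in>Delta. c a \<ge> 0"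
    unfolding pos_roots_def eq_simple_comb_iff by blast
  then show "b \<in> Phi \<and> (\<forall>a\<in>Delta. root_coeff b a \<ge> 0)" by (simp add: root_coeff_eq)
next
  assume "b \<in> Phi \<and> (\<forall>a\<in>Delta. root_coeff b a \<ge> 0)"
  then show "b \<in> Phi_pos"
    unfolding pos_roots_def eq_simple_comb_iff
    using simple_comb_root_coeff[of b] by (auto intro!: exI[of _ "root_coeff b"])
qed

lemma pos_roots_subset: "Phi_pos \<subseteq> Phi"
  using pos_roots_iff by blast

lemma finite_pos_roots: "finite Phi_pos"
  using pos_roots_subset finite_roots finite_subset by blast

lemma root_coeff_simple: "a \<in> Delta \<Longrightarrow> x \<in> Delta \<Longrightarrow> root_coeff a x = of_bool (x = a)"
  using root_coeff_eq[OF simple_comb_delta[symmetric]] by blast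

lemma height_simple: "a \<in> Delta \<Longrightarrow> height a = 1"
  by (simp add: height_def root_coeff_simple finite_simple_roots)

lemma simple_roots_pos: "Delta \<subseteq> Phi_pos"
  using simple_roots_subset by (auto simp: pos_roots_iff root_coeff_simple)

lemma root_coeff_reflX:
  assumes "a \<in> Delta" "b \<in> Phi" "x \<in> Delta"
  shows "root_coeff (s a b) x = root_coeff b x - pair b (cv a) * of_bool (x = a)"
proof (rule root_coeff_eq[OF _ assms(3)])
  show "s a b = simple_comb (\<lambda>x. root_coeff b x - pair b (cv a) * of_bool (x = a))"
    using simple_comb_root_coeff[OF assms(2)] assms(1)
    by (simp only: simple_comb_diff simple_comb_smul simple_comb_delta reflX_eq)
qed

lemma height_reflX:
  "a \<in> Delta \<Longrightarrow> b \<in> Phi \<Longrightarrow> height (s a b) = height b - pair b (cv a)"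
  by (simp add: height_def root_coeff_reflX sum_subtractf finite_simple_roots)

lemma root_coeff_uminus:
  assumes "b \<in> Phi" "x \<in> Delta" shows "root_coeff (- b) x = - root_coeff b x"
proof (rule root_coeff_eq[OF _ assms(2)])
  show "- b = simple_comb (\<lambda>x. - root_coeff b x)"
    using simple_comb_root_coeff[OF assms(1)] by (simp only: simple_comb_uminus)
qed

lemma pos_or_uminus_pos: "b \<in> Phi \<Longrightarrow> b \<in> Phi_pos \<or> - b \<in> Phi_pos"
  using root_coeff_sign uminus_root by (fastforce simp: pos_roots_iff root_coeff_uminus)

lemma height_pos: assumes "b \<in> Phi_pos" shows "height b \<ge> 1"
proof (rule ccontr)
  assume "\<not> height b \<ge> 1"
  moreover have nonneg: "\<forall>a\<in>Delta. root_coeff b a \<ge> 0" using assms pos_roots_iff by blast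
  ultimately have "height b = 0" unfolding height_def using sum_nonneg[of Delta] by force
  then have "\<forall>a\<in>Delta. root_coeff b a = 0"
    unfolding height_def using sum_nonneg_eq_0_iff[OF finite_simple_roots] nonneg by blast
  then have "b = 0"
    using simple_comb_root_coeff assms pos_roots_subset by (force simp: simple_comb_def)
  then show False using root_nonzero assms pos_roots_subset by blast
qed

lemma pos_root_supported_on_simple:
  assumes "b \<in> Phi_pos" "a \<in> Delta" "\<forall>x\<in>Delta - {a}. root_coeff b x = 0"
  shows "b = a"
proof -
  have b: "b \<in> Phi" using assms(1) pos_roots_subset by blast
  have b_eq: "b = smul (root_coeff b a) a"
    using simple_comb_single[OF assms(2,3)] simple_comb_root_coeff[OF b] by simp
  moreover have "root_coeff b a \<noteq> 0"
    using b_eq root_nonzero[OF b] by auto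
  moreover have "root_coeff b a \<ge> 0"
    using assms(1,2) pos_roots_iff by blast
  ultimately show ?thesis
    using root_pos_multiple_eq[of a "root_coeff b a"] simple_roots_subset assms(2) b by force
qed

text \<open>For the invariant form, \<open>(b, b) = \<Sum>\<^sub>a c\<^sub>a (a, b) > 0\<close>, so some simple root \<open>a\<close> of \<open>b\<close> has
  \<open>(a, b) > 0\<close>, i.e.\ \<open>\<langle>b, a\<^sup>\<or>\<rangle> > 0\<close>; and \<open>s\<^sub>a b\<close> keeps a positive coefficient
  at some other simple root.\<close>
lemma exists_simple_reflection_lowering:
  assumes "b \<in> Phi_pos" "b \<notin> Delta"
  obtains a where "a \<in> Delta" "pair b (cv a) > 0" "s a b \<in> Phi_pos"
proof -
  have b: "b \<in> Phi" using assms(1) pos_roots_subset by blast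
  have nonneg: "\<forall>a\<in>Delta. root_coeff b a \<ge> 0" using assms(1) pos_roots_iff by blast
  have "0 < inv_form b b" using inv_form_root_pos[OF b] .
  also have "\<dots> = (\<Sum>a\<in>Delta. root_coeff b a * inv_form a b)"
    by (subst (1) simple_comb_root_coeff[OF b, symmetric])
      (simp add: simple_comb_def inv_form_sum_left inv_form_smul_left)
  finally have "\<exists>a\<in>Delta. 0 < root_coeff b a * inv_form a b"
    using sum_nonpos[of Delta "\<lambda>a. root_coeff b a * inv_form a b"] by (meson not_le)
  then obtain a where a: "a \<in> Delta" "0 < root_coeff b a * inv_form a b" by blast
  have a_root: "a \<in> Phi" using a(1) simple_roots_subset by blast
  have "inv_form b a > 0"
    using a nonneg by (auto simp: zero_less_mult_iff inv_form_commute[of a b])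
  then have "0 < pair b (cv a) * inv_form a a"
    using inv_form_root_right[OF a_root, of b] by linarith
  then have pos: "pair b (cv a) > 0"
    using inv_form_root_pos[OF a_root] by (simp add: zero_less_mult_iff)
  obtain x where x: "x \<in> Delta" "x \<noteq> a" "root_coeff b x \<noteq> 0"
    using pos_root_supported_on_simple[OF assms(1) a(1)] assms(2) a(1) by blast
  then have "root_coeff (s a b) x > 0"
    using root_coeff_reflX[OF a(1) b x(1)] nonneg order_le_less by auto
  moreover have sab: "s a b \<in> Phi" using reflX_root[OF a_root b] .
  ultimately have "\<forall>y\<in>Delta. root_coeff (s a b) y \<ge> 0"
    using root_coeff_sign[OF sab] x(1) by force
  then have "s a b \<in> Phi_pos" using sab by (simp add: pos_roots_iff)
  then show ?thesis using that a(1) pos by blast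
qed

lemma rpair_dual_simple_comb:
  assumes "\<forall>a\<in>Delta. \<forall>b\<in>Delta. rpair (w a) b = (if a = b then 1 else 0)" "b \<in> Phi"
  shows "rpair (\<Sum>a\<in>Delta. w a) b = of_int (height b)"
proof -
  have "rpair (w a) b = of_int (root_coeff b a)" if "a \<in> Delta" for a
    using rpair_dual_basis_sum[OF finite_simple_roots that, of w "\<lambda>x. x" "root_coeff b"]
      assms(1) simple_comb_root_coeff[OF assms(2)] by (simp add: simple_comb_def)
  then show ?thesis by (simp add: rpair_sum_left height_def)
qed

end

section \<open>Irreducible simply-laced root systems\<close>

lemma irreducible_base_constant:
  assumes "irreducible_base Delta cv"
    and edge: "\<And>a b. a \<in> Delta \<Longrightarrow> b \<in> Delta \<Longrightarrow> pair a (cv b) \<noteq> 0 \<Longrightarrow> f a = f b"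
    and "a \<in> Delta" "b \<in> Delta"
  shows "f a = f b"
proof (rule ccontr)
  assume "f a \<noteq> f b"
  define A where "A = {x \<in> Delta. f x = f a}"
  have "\<forall>x\<in>A. \<forall>y\<in>Delta - A. pair x (cv y) = 0"
    using edge by (auto simp: A_def)
  moreover have "A \<noteq> {}" "Delta - A \<noteq> {}"
    using assms(3,4) \<open>f a \<noteq> f b\<close> by (auto simp: A_def)
  moreover have "A \<union> (Delta - A) = Delta" "A \<inter> (Delta - A) = {}"
    by (auto simp: A_def)
  ultimately show False
    using assms(1) unfolding irreducible_base_def by (metis (no_types, lifting))
qed

locale simply_laced_root_system = based_root_system +
  assumes irreducible: "irreducible_base Delta cv"
    and simply_laced: "simply_laced Delta cv"
    and rank: "card Delta \<ge> 2"
begin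

lemma simple_roots_nonempty: "Delta \<noteq> {}"
  using irreducible by (simp add: irreducible_base_def)

lemma simple_roots_same_length:
  assumes "a \<in> Delta" "b \<in> Delta" shows "inv_form a a = inv_form b b"
proof (rule irreducible_base_constant[OF irreducible _ assms, where f = "\<lambda>x. inv_form x x"])
  fix x y assume "x \<in> Delta" "y \<in> Delta" "pair x (cv y) \<noteq> 0"
  then show "inv_form x x = inv_form y y"
    using simply_laced simple_roots_subset
    by (intro inv_form_eq_if_pair_symmetric) (auto simp: simply_laced_def)
qed

lemma pos_root_length:
  assumes "b \<in> Phi_pos" "a \<in> Delta" shows "inv_form b b = inv_form a a"
  using assms(1)
proof (induction "nat (height b)" arbitrary: b rule: less_induct)
  case less
  show ?case
  proof (cases "b \<in> Delta")
    case True
    then show ?thesis using simple_roots_same_length assms(2) by blast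
  next
    case False
    then obtain a' where a': "a' \<in> Delta" "pair b (cv a') > 0" "s a' b \<in> Phi_pos"
      using exists_simple_reflection_lowering less.prems by blast
    have "height (s a' b) = height b - pair b (cv a')"
      using height_reflX a'(1) less.prems pos_roots_subset by blast
    then have "nat (height (s a' b)) < nat (height b)"
      using height_pos[OF a'(3)] a'(2) by simp
    then have "inv_form (s a' b) (s a' b) = inv_form a a" using less.hyps a'(3) by blast
    then show ?thesis using inv_form_reflX a'(1) simple_roots_subset by auto
  qed
qed

lemma roots_same_length:
  assumes "a \<in> Phi" "b \<in> Phi" shows "inv_form a a = inv_form b b"
proof -
  obtain a0 where a0: "a0 \<in> Delta" using simple_roots_nonempty by blast
  have "inv_form x x = inv_form a0 a0" if "x \<in> Phi" for x
  proof -
    have "inv_form (- x) (- x) = inv_form x x"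
      by (simp add: inv_form_uminus_left inv_form_uminus_right)
    then show ?thesis using pos_or_uminus_pos[OF that] pos_root_length[OF _ a0] by metis
  qed
  then show ?thesis using assms by simp
qed

lemma pair_root_coroot_commute:
  assumes "a \<in> Phi" "b \<in> Phi" shows "pair a (cv b) = pair b (cv a)"
proof -
  have "pair a (cv b) * inv_form b b = 2 * inv_form a b"
    using inv_form_root_right[OF assms(2), of a] by simp
  also have "\<dots> = pair b (cv a) * inv_form b b"
    using inv_form_root_right[OF assms(1), of b] roots_same_length[OF assms]
      inv_form_commute[of a b] by simp
  moreover have "inv_form b b \<noteq> 0" using inv_form_root_pos[OF assms(2)] by simp
  ultimately show ?thesis by simp
qed

lemma pair_root_coroot_bound:
  assumes "a \<in> Phi" "b \<in> Phi" shows "\<bar>pair b (cv a)\<bar> \<le> 2"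
proof -
  define k where "k = pair b (cv a)"
  define L where "L = inv_form a a"
  have ba: "2 * inv_form b a = k * L" and ab: "inv_form a b = inv_form b a"
    using inv_form_root_right[OF assms(1), of b] inv_form_commute[of a b] by (simp_all add: k_def L_def)
  have bb: "inv_form b b = L" using roots_same_length[OF assms] by (simp add: L_def)
  have "0 \<le> inv_form (smul 2 b - smul k a) (smul 2 b - smul k a)"
    by (rule inv_form_nonneg)
  also have "\<dots> = (4 - k\<^sup>2) * L"
    using ba ab bb by (simp add: inv_form_diff_left inv_form_diff_right inv_form_smul_left
        inv_form_smul_right L_def algebra_simps power2_eq_square)
  finally have "k\<^sup>2 \<le> 2\<^sup>2"
    using inv_form_root_pos[OF assms(1)] by (simp add: L_def zero_le_mult_iff)
  then show ?thesis using abs_le_square_iff[of k 2] by (simp add: k_def)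
qed

text \<open>If \<open>\<langle>b, a\<^sup>\<or>\<rangle> = 2\<close> then \<open>b - a\<close> is isotropic, so \<open>\<langle>x, a\<^sup>\<or>\<rangle> = \<langle>x, b\<^sup>\<or>\<rangle>\<close> for all
  \<open>x \<in> X\<close>, whence \<open>a\<^sup>\<or> = b\<^sup>\<or>\<close>.\<close>
lemma pair_root_coroot_eq_2:
  assumes "a \<in> Phi" "b \<in> Phi" "pair b (cv a) = 2" shows "b = a"
proof -
  define L where "L = inv_form a a"
  have aa: "inv_form a a = L" and bb: "inv_form b b = L"
    using roots_same_length[OF assms(1,2)] by (simp_all add: L_def)
  have ba: "inv_form b a = L" and ab: "inv_form a b = L"
    using inv_form_root_right[OF assms(1), of b] inv_form_commute[of a b] assms(3) aa by simp_all
  have "inv_form (b - a) (b - a) = 0"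
    using aa bb ab ba by (simp add: inv_form_diff_left inv_form_diff_right)
  then have "pair (b - a) (cv g) = 0" if "g \<in> Phi" for g
    using inv_form_eq_0_imp_pair_coroot_eq_0 that by blast
  then have "inv_form x (b - a) = 0" for x
    unfolding inv_form_def by (intro sum.neutral) simp
  then have xb: "inv_form x b = inv_form x a" for x
    by (simp add: inv_form_diff_right)
  have "pair x (cv b) * L = pair x (cv a) * L" for x
  proof -
    have "pair x (cv b) * L = 2 * inv_form x b"
      using inv_form_root_right[OF assms(2), of x] bb by simp
    also have "\<dots> = pair x (cv a) * L"
      using inv_form_root_right[OF assms(1), of x] aa xb[of x] by simp
    finally show ?thesis .
  qed
  moreover have "L \<noteq> 0" using inv_form_root_pos[OF assms(1)] aa by simp
  ultimately have "cv b = cv a" by (intro pair_right_inject) simp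
  then show ?thesis using inj_on_coroot assms(1,2) by (simp add: inj_on_eq_iff)
qed

lemma exists_simple_reflection_lowering_by_one:
  assumes "b \<in> Phi_pos" "b \<notin> Delta"
  obtains a where "a \<in> Delta" "pair b (cv a) = 1" "s a b \<in> Phi_pos"
proof -
  obtain a where a: "a \<in> Delta" "pair b (cv a) > 0" "s a b \<in> Phi_pos"
    using exists_simple_reflection_lowering[OF assms] .
  have "a \<in> Phi" "b \<in> Phi" using a(1) assms(1) simple_roots_subset pos_roots_subset by auto
  then have "pair b (cv a) \<le> 2" "pair b (cv a) \<noteq> 2"
    using pair_root_coroot_bound pair_root_coroot_eq_2 a(1) assms(2) by fastforce+
  then show ?thesis using that a by simp
qed

lemma pos_root_induct [consumes 1, case_names simple reflect]:
  assumes "b \<in> Phi_pos"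
    and simple: "\<And>a. a \<in> Delta \<Longrightarrow> R a"
    and reflect: "\<And>a b. a \<in> Delta \<Longrightarrow> b \<in> Phi_pos \<Longrightarrow> pair b (cv a) = -1 \<Longrightarrow>
      s a b \<in> Phi_pos \<Longrightarrow> R b \<Longrightarrow> R (s a b)"
  shows "R b"
  using assms(1)
proof (induction "nat (height b)" arbitrary: b rule: less_induct)
  case less
  show ?case
  proof (cases "b \<in> Delta")
    case True
    then show ?thesis by (rule simple)
  next
    case False
    then obtain a where a: "a \<in> Delta" "pair b (cv a) = 1" "s a b \<in> Phi_pos"
      using exists_simple_reflection_lowering_by_one less.prems by blast
    have a_root: "a \<in> Phi" and b_root: "b \<in> Phi"
      using a(1) less.prems simple_roots_subset pos_roots_subset by auto
    have "height (s a b) = height b - 1"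
      using height_reflX[OF a(1) b_root] a(2) by simp
    then have "R (s a b)"
      using less.hyps a(3) height_pos[OF a(3)] by simp
    moreover have "pair (s a b) (cv a) = -1"
      using a(2) by (simp add: reflX_eq pair_diff_left pair_smul_left pair_root_coroot_self[OF a_root])
    moreover have "s a (s a b) \<in> Phi_pos"
      using less.prems by (simp add: reflX_involution[OF a_root])
    ultimately have "R (s a (s a b))"
      using reflect a(1,3) by blast
    then show ?thesis by (simp add: reflX_involution[OF a_root])
  qed
qed

lemma pos_root_heights:
  assumes "b \<in> Phi_pos" "1 \<le> k" "k \<le> height b"
  shows "\<exists>c\<in>Phi_pos. height c = k"
  using assms
proof (induction "nat (height b - k)" arbitrary: b rule: less_induct)
  case less
  show ?case
  proof (cases "height b = k")
    case False
    then have "b \<notin> Delta" using less.prems height_simple by fastforce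
    then obtain a where a: "a \<in> Delta" "pair b (cv a) = 1" "s a b \<in> Phi_pos"
      using exists_simple_reflection_lowering_by_one less.prems(1) by blast
    have "height (s a b) = height b - 1"
      using height_reflX a less.prems(1) pos_roots_subset by auto
    then show ?thesis using less.hyps[of "s a b"] a(3) less.prems False by simp
  qed (use less.prems in blast)
qed

lemma height_image_pos_roots: "height ` Phi_pos = {1 .. Max (height ` Phi_pos)}"
proof
  show "height ` Phi_pos \<subseteq> {1 .. Max (height ` Phi_pos)}"
    using height_pos finite_pos_roots by auto
  have "Phi_pos \<noteq> {}" using simple_roots_pos simple_roots_nonempty by blast
  then have "Max (height ` Phi_pos) \<in> height ` Phi_pos"
    using finite_pos_roots by (intro Max_in) auto
  then obtain b where "b \<in> Phi_pos" "height b = Max (height ` Phi_pos)"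
    by (metis imageE)
  then show "{1 .. Max (height ` Phi_pos)} \<subseteq> height ` Phi_pos"
    using pos_root_heights by fastforce
qed

text \<open>The Dynkin diagram is connected with at least two vertices, so \<open>a\<close> has a neighbour \<open>b\<close>;
  then \<open>\<langle>a, b\<^sup>\<or>\<rangle> = \<plusminus>1\<close> because \<open>b \<noteq> \<plusminus>a\<close>, and \<open>y = \<plusminus>b\<^sup>\<or>\<close> works.\<close>
lemma simple_root_pairs_to_one:
  assumes "a \<in> Delta" shows "\<exists>y. pair a y = 1"
proof -
  have a_root: "a \<in> Phi" using assms simple_roots_subset by blast
  have "Delta - {a} \<noteq> {}"
  proof
    assume "Delta - {a} = {}"
    then have "card Delta \<le> card {a}" by (intro card_mono) auto
    with rank show False by simp
  qed
  then obtain c where c: "c \<in> Delta" "c \<noteq> a" by blast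
  have "\<exists>x\<in>Delta. \<exists>y\<in>Delta. pair x (cv y) \<noteq> 0 \<and> (x = a) \<noteq> (y = a)"
    using irreducible_base_constant[OF irreducible _ assms c(1), where f = "\<lambda>x. x = a"] c(2)
    by blast
  then obtain b where b: "b \<in> Delta" "b \<noteq> a" "pair a (cv b) \<noteq> 0"
    using simply_laced assms unfolding simply_laced_def by metis
  have b_root: "b \<in> Phi" using b(1) simple_roots_subset by blast
  have "pair a (cv b) \<noteq> 2" using pair_root_coroot_eq_2[OF b_root a_root] b(2) by blast
  moreover have "pair a (cv b) \<noteq> -2"
  proof
    assume "pair a (cv b) = -2"
    then have "- a = b"
      using pair_root_coroot_eq_2[OF b_root uminus_root[OF a_root]] by (simp add: pair_uminus_left)
    then show False
      using root_coeff_uminus[OF a_root b(1)] root_coeff_simple assms b by simp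
  qed
  ultimately have "pair a (cv b) = 1 \<or> pair a (cv b) = -1"
    using pair_root_coroot_bound[OF b_root a_root] b(3) by auto
  then have "pair a (smul (pair a (cv b)) (cv b)) = 1"
    by (auto simp: pair_smul_right)
  then show ?thesis by blast
qed

lemma pos_root_pairs_to_one:
  assumes "b \<in> Phi_pos" shows "\<exists>y. pair b y = 1"
  using assms
proof (induction rule: pos_root_induct)
  case (simple a)
  then show ?case by (rule simple_root_pairs_to_one)
next
  case (reflect a b)
  then obtain y where "pair b y = 1" by blast
  then have "pair (s a b) (sv a y) = 1"
    using reflect.hyps(1) simple_roots_subset by (auto simp: pair_reflX reflY_involution)
  then show ?case by blast
qed

lemma coroot_simple_comb:
  assumes "b \<in> Phi_pos" shows "cv b = (\<Sum>a\<in>Delta. smul (root_coeff b a) (cv a))"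
  using assms
proof (induction rule: pos_root_induct)
  case (simple a)
  then show ?case
    using sum_smul_single[OF finite_simple_roots simple, of "root_coeff a" cv]
    by (simp add: root_coeff_simple)
next
  case (reflect a b)
  have a_root: "a \<in> Phi" and b_root: "b \<in> Phi"
    using reflect.hyps(1,2) simple_roots_subset pos_roots_subset by auto
  have "pair a (cv b) = -1"
    using reflect.hyps(3) pair_root_coroot_commute[OF a_root b_root] by simp
  then have "cv (s a b) = cv b + cv a"
    by (simp add: coroot_reflX[OF a_root b_root] reflY_eq fun_eq_iff smul_apply)
  also have "\<dots> = (\<Sum>x\<in>Delta. smul (root_coeff b x + of_bool (x = a)) (cv x))"
    using reflect.IH sum_smul_single[OF finite_simple_roots reflect.hyps(1), of "\<lambda>x. of_bool (x = a)" cv]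
    by (simp add: smul_add_left sum.distrib)
  also have "\<dots> = (\<Sum>x\<in>Delta. smul (root_coeff (s a b) x) (cv x))"
    using root_coeff_reflX[OF reflect.hyps(1) b_root] reflect.hyps(3) by (intro sum.cong) simp_all
  finally show ?case .
qed

lemma height_quotients_pos_roots:
  assumes "\<forall>a\<in>Delta. \<forall>b\<in>Delta. rpair (omegav a) b = (if a = b then 1 else 0)"
  shows "(\<lambda>b. of_int (height b) / d) ` Phi_pos
    = {real k / d | k::nat. 1 \<le> k \<and> real k \<le> Max (ht Delta omegav ` Phi_pos)}"
proof -
  have "ht Delta omegav ` Phi_pos = real_of_int ` height ` Phi_pos"
    unfolding image_image ht_def using rpair_dual_simple_comb[OF assms] pos_roots_subset
    by (intro image_cong) auto
  moreover have "height ` Phi_pos \<noteq> {}"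
    using simple_roots_pos simple_roots_nonempty by blast
  ultimately have "Max (ht Delta omegav ` Phi_pos) = of_int (Max (height ` Phi_pos))"
    using mono_Max_commute[of real_of_int "height ` Phi_pos"] finite_pos_roots
    by (simp add: mono_def)
  then show ?thesis
    using image_divide_int_interval[of d "Max (height ` Phi_pos)"] height_image_pos_roots
    by (simp add: image_image)
qed

end

section \<open>Weyl-invariant quadratic forms\<close>

locale weyl_invariant_quadratic_form = root_system Phi cv
  for Phi :: "'m::finite lat set" and cv +
  fixes Q :: "'m lat \<Rightarrow> int"
  assumes quadratic: "quadratic_form Q"
    and invariant: "weyl_invariant Phi cv Q"
begin

lemma B_Q_reflY: "a \<in> Phi \<Longrightarrow> B_Q Q (sv a y) (sv a z) = B_Q Q y z"
  using invariant by (simp add: B_Q_def weyl_invariant_def reflY_add[symmetric])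

text \<open>Invariance under \<open>s\<^sub>a\<close>, which sends \<open>a\<^sup>\<or>\<close> to \<open>-a\<^sup>\<or>\<close>, gives
  \<open>B(a\<^sup>\<or>, z) = -B(a\<^sup>\<or>, z) + \<langle>a, z\<rangle> B(a\<^sup>\<or>, a\<^sup>\<or>)\<close>.\<close>
lemma B_Q_coroot:
  assumes "a \<in> Phi" shows "B_Q Q (cv a) z = pair a z * Q (cv a)"
proof -
  have "sv a (cv a) = smul (-1) (cv a)" "sv a z = z + smul (- pair a z) (cv a)"
    using reflY_self[OF assms] by (simp_all add: reflY_eq fun_eq_iff smul_apply)
  then have "B_Q Q (cv a) z = - B_Q Q (cv a) z + pair a z * B_Q Q (cv a) (cv a)"
    using B_Q_reflY[OF assms, of "cv a" z]
    by (simp add: B_Q_smul_left[OF quadratic] B_Q_smul_right[OF quadratic]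
        B_Q_add_right[OF quadratic])
  then show ?thesis by (simp add: B_Q_self[OF quadratic])
qed

end

locale simply_laced_cover =
  simply_laced_root_system Phi cv Delta + weyl_invariant_quadratic_form Phi cv Q
  for Phi cv Delta Q
begin

lemma Q_simple_coroots_eq:
  assumes "a \<in> Delta" "b \<in> Delta" shows "Q (cv a) = Q (cv b)"
proof (rule irreducible_base_constant[OF irreducible _ assms, where f = "\<lambda>x. Q (cv x)"])
  fix x y assume xy: "x \<in> Delta" "y \<in> Delta" and "pair x (cv y) \<noteq> 0"
  moreover have "pair x (cv y) = pair y (cv x)"
    using simply_laced xy by (simp add: simply_laced_def)
  moreover have "pair x (cv y) * Q (cv x) = pair y (cv x) * Q (cv y)"
  proof -
    have "pair x (cv y) * Q (cv x) = B_Q Q (cv x) (cv y)"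
      using B_Q_coroot[of x "cv y"] xy simple_roots_subset by auto
    also have "\<dots> = B_Q Q (cv y) (cv x)" by (rule B_Q_commute)
    also have "\<dots> = pair y (cv x) * Q (cv y)"
      using B_Q_coroot[of y "cv x"] xy simple_roots_subset by auto
    finally show ?thesis .
  qed
  ultimately show "Q (cv x) = Q (cv y)" by simp
qed

lemma Q_pos_coroot:
  assumes "b \<in> Phi_pos" "a \<in> Delta" shows "Q (cv b) = Q (cv a)"
  using assms(1)
proof (induction rule: pos_root_induct)
  case (simple a')
  then show ?case using Q_simple_coroots_eq assms(2) by blast
next
  case (reflect a' b)
  have "a' \<in> Phi" "b \<in> Phi"
    using reflect.hyps(1,2) simple_roots_subset pos_roots_subset by auto
  then have "Q (cv (s a' b)) = Q (cv b)"
    using invariant by (simp add: coroot_reflX weyl_invariant_def)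
  with reflect.IH show ?case by simp
qed

lemma n_tilde_pos_root:
  assumes "n \<ge> 1" "b \<in> Phi_pos" "a \<in> Delta"
  shows "n_tilde Q n cv b = n_root Q n cv a"
proof (rule n_tilde_eqI)
  have b_root: "b \<in> Phi" using assms(2) pos_roots_subset by blast
  show "cv b \<noteq> 0" using coroot_nonzero[OF b_root] .
  show "n_root Q n cv a > 0"
    using assms(1) by (simp add: n_root_def pos_imp_zdiv_pos_iff zdvd_imp_le)
  obtain y where "pair b y = 1" using pos_root_pairs_to_one[OF assms(2)] by blast
  then show "smul m (cv b) \<in> Y_Qn Q n \<longleftrightarrow> n_root Q n cv a dvd m" for m
    using smul_mem_Y_Qn_iff[OF quadratic B_Q_coroot[OF b_root] _ assms(1)]
    by (simp add: n_root_def Q_pos_coroot[OF assms(2,3)])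
qed

lemma f_X_pos_coroot:
  assumes "n \<ge> 1" "\<forall>a\<in>Delta. \<forall>b\<in>Delta. rpair (omega a) (cv b) = (if a = b then 1 else 0)"
    and "b \<in> Phi_pos" "a \<in> Delta"
  shows "f_X Delta omega Q n cv (cv b) = of_int (height b) / of_int (n_root Q n cv a)"
proof -
  have "f_X Delta omega Q n cv (cv b) =
      (\<Sum>x\<in>Delta. rpair (omega x) (cv b) / of_int (n_root Q n cv a))"
    unfolding f_X_def using n_tilde_pos_root[OF assms(1) _ assms(4)] simple_roots_pos
    by (intro sum.cong) auto
  also have "\<dots> = (\<Sum>x\<in>Delta. of_int (root_coeff b x) / of_int (n_root Q n cv a))"
    using rpair_dual_basis_sum[OF finite_simple_roots _ assms(2)] coroot_simple_comb[OF assms(3)]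
    by (intro sum.cong) simp_all
  finally show ?thesis by (simp add: height_def sum_divide_distrib)
qed

lemma f_Y_pos_root:
  assumes "n \<ge> 1" "\<forall>a\<in>Delta. \<forall>b\<in>Delta. rpair (omegav a) b = (if a = b then 1 else 0)"
    and "b \<in> Phi_pos" "a \<in> Delta"
  shows "f_Y Delta omegav Q n cv b = of_int (height b) / of_int (n_root Q n cv a)"
proof -
  have "rpair (\<Sum>x\<in>Delta. omegav x) b = of_int (height b)"
    using rpair_dual_simple_comb[OF assms(2)] assms(3) pos_roots_subset by blast
  then show ?thesis unfolding f_Y_def using n_tilde_pos_root[OF assms(1,3,4)] by simp
qed

end

theorem lemma3p1:
  fixes Phi Delta :: "('m::finite) lat set"
    and cv :: "'m lat \<Rightarrow> 'm lat"
    and omega omegav :: "'m lat \<Rightarrow> 'm rlat"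
    and Q :: "'m lat \<Rightarrow> int" and n :: nat
  assumes "root_datum Phi cv"
    and "is_base Phi Delta"
    and "irreducible_base Delta cv"
    and "simply_laced Delta cv"
    and "card Delta \<ge> 2"
    and "\<forall>a\<in>Delta. \<forall>b\<in>Delta. rpair (omega a) (cv b) = (if a = b then 1 else 0)"
    and "\<forall>a\<in>Delta. \<forall>b\<in>Delta. rpair (omegav a) b = (if a = b then 1 else 0)"
    and "n \<ge> 1"
    and "quadratic_form Q"
    and "weyl_invariant Phi cv Q"
  shows "\<exists>N. (\<forall>a\<in>Delta. n_root Q n cv a = N) \<and>
     f_X Delta omega Q n cv ` (cv ` pos_roots Phi Delta)
        = {real k / real_of_int N | k::nat. 1 \<le> k \<and> real k \<le> Max (ht Delta omegav ` pos_roots Phi Delta)} \<and>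
     f_Y Delta omegav Q n cv ` pos_roots Phi Delta
        = {real k / real_of_int N | k::nat. 1 \<le> k \<and> real k \<le> Max (ht Delta omegav ` pos_roots Phi Delta)}"
proof -
  interpret simply_laced_cover Phi cv Delta Q
    using assms(1-5,9,10) by unfold_locales
  obtain a0 where a0: "a0 \<in> Delta" using simple_roots_nonempty by blast
  define N where "N = n_root Q n cv a0"
  define heights where "heights = (\<lambda>b. of_int (height b) / real_of_int N) ` Phi_pos"
  have "\<forall>a\<in>Delta. n_root Q n cv a = N"
    using Q_simple_coroots_eq[OF _ a0] by (simp add: N_def n_root_def)
  moreover have "f_X Delta omega Q n cv ` (cv ` Phi_pos) = heights"
    unfolding image_image heights_def N_def
    using f_X_pos_coroot[OF assms(8,6) _ a0] by (intro image_cong) simp_all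
  moreover have "f_Y Delta omegav Q n cv ` Phi_pos = heights"
    unfolding heights_def N_def
    using f_Y_pos_root[OF assms(8,7) _ a0] by (intro image_cong) simp_all
  moreover have "heights = {real k / real_of_int N | k::nat. 1 \<le> k \<and>
      real k \<le> Max (ht Delta omegav ` Phi_pos)}"
    unfolding heights_def by (rule height_quotients_pos_roots[OF assms(7)])
  ultimately show ?thesis by (intro exI[of _ N]) simp
qed

end
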